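(* Let $n\ge1$, $q\in[0,1]$, and let $\mu_q$ be the probability distribution on $\{z\in\{0,1\}^{2n}:\mathrm{wt}(z)=n\}$ defined by $\mu_q(z)\propto q^{-2A(z)}$ if $0<q\le1$, and $\mu_0=\delta_{z,0^n1^n}$. Then for every $w\in\{1,\dots,2n\}$, $$\mu_q\Bigl(\#\{k\le w: z_k=1\}\;\le\;\#\{k\le w-1:z_k=0\}\Bigr)\;\ge\;\tfrac12 .$$ (Geometrically: in the state $\sum_z q^{-A(z)}|x,z\rangle_V$, the $w$-th particle is found in the left half of the grid with probability at least $1/2$.)
   Context: $A(z)=\sum_{j=1}^{2n}jz_j-\frac{n(n+1)}{2}$ for $z\in\{0,1\}^{2n}$ of Hamming weight $n$. A string $z$ is identified with the monotone lattice path in the rotated $n\times n$ grid from the top vertex $(0,0)$ to the bottom vertex $(n,n)$ whose $k$-th step goes from $(i,j)$ to $(i+1-z_k,j+z_k)$; $A(z)$ is the number of unit squares of the grid lying to the right of this path. The $w$-th step (edge) has horizontal coordinate $t=n+j-i+z_w$, where $(i,j)$ is its starting vertex, and lies in the left half of the grid iff $t\le n$, which is exactly the displayed event. *)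

theory Defs
  imports Complex_Main
begin

text \<open>Binary strings z in {0,1}^(2n) of Hamming weight n, represented as lists of
  naturals with entries in {0,1}; the k-th coordinate z_k (1-based) is z ! (k-1).\<close>
definition balanced_strings :: "nat \<Rightarrow> nat list set" where
  "balanced_strings n = {z. length z = 2 * n \<and> set z \<subseteq> {0, 1} \<and> sum_list z = n}"

definition Aval :: "nat \<Rightarrow> nat list \<Rightarrow> int" where
  "Aval n z = (\<Sum>j = 1..2 * n. int j * int (z ! (j - 1))) - int (n * (n + 1) div 2)"

definition mu :: "real \<Rightarrow> nat \<Rightarrow> (nat list \<Rightarrow> bool) \<Rightarrow> real" where
  "mu q n E =
     (if q = 0 then (if E (replicate n 0 @ replicate n 1) then 1 else 0)
      else (\<Sum>z\<in>{z \<in> balanced_strings n. E z}. q powi (- 2 * Aval n z))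
           / (\<Sum>z\<in>balanced_strings n. q powi (- 2 * Aval n z)))"

end

theory Submission
  imports Defs
begin

(*
  Read z as a lattice path with steps +1 (z_i = 1) and -1 (z_i = 0); its
  height after k steps is h(k) = #ones - #zeros among z_0..z_(k-1), and z is balanced
  iff h(2n) = 0.  The event of the theorem for w = p + 1 says h(p) + z_p <= 0, i.e.
  step p of the path does not run strictly above the axis.
  If the event fails, step p lies in a positive excursion [t0, t1] of the path
  (t0 the last zero of h at or before p, t1 the first zero after p).  Reflecting that
  excursion (complementing z on [t0, t1)) gives a balanced path on which the event
  holds, the map is an involution, and the area A grows by the sum of the heights over
  the excursion, which is nonnegative.  Since q <= 1 the weight q^(-2A) does not
  decrease, so the complement of the event injects into the event with weights not
  decreasing, which forces probability at least 1/2.  The case q = 0 is a direct check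
  at the point 0^n 1^n.
  The file develops: heights, reflection of a segment, the excursion flip and its
  properties, the area gain, the translation of the event, an abstract weighting lemma,
  and finally the theorem.
*)

section \<open>Heights of a 0/1 path\<close>

definition path_step :: "nat list \<Rightarrow> nat \<Rightarrow> int" where
  "path_step z i = 2 * int (z ! i) - 1"

definition height :: "nat list \<Rightarrow> nat \<Rightarrow> int" where
  "height z k = (\<Sum>i<k. path_step z i)"

lemma height_0 [simp]: "height z 0 = 0"
  by (simp add: height_def)

lemma height_Suc: "height z (Suc k) = height z k + path_step z k"
  by (simp add: height_def)

lemma height_eq_ones: "height z k = 2 * (\<Sum>i<k. int (z ! i)) - int k"
  by (induction k) (auto simp: height_Suc path_step_def)

lemma nth_binary:
  assumes "set z \<subseteq> {0, 1}" "i < length z"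
  shows "z ! i = 0 \<or> z ! i = 1"
  using assms nth_mem by blast

lemma height_step_bound:
  assumes "set z \<subseteq> {0, 1}" "k < length z"
  shows "\<bar>height z (Suc k) - height z k\<bar> \<le> 1"
  using nth_binary[OF assms] by (auto simp: height_Suc path_step_def)

lemma balanced_strings_iff:
  "z \<in> balanced_strings n \<longleftrightarrow>
     length z = 2 * n \<and> set z \<subseteq> {0, 1} \<and> height z (length z) = 0"
proof -
  have "(\<Sum>i<length z. int (z ! i)) = int (sum_list z)"
    by (simp add: sum_list_sum_nth atLeast0LessThan flip: of_nat_sum)
  then have "height z (length z) = 2 * int (sum_list z) - int (length z)"
    by (simp add: height_eq_ones)
  then show ?thesis
    by (auto simp: balanced_strings_def)
qed

lemma positive_on_interval:
  fixes g :: "nat \<Rightarrow> int"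
  assumes unit_steps: "\<And>k. a \<le> k \<Longrightarrow> k < b \<Longrightarrow> \<bar>g (Suc k) - g k\<bar> \<le> 1"
    and nonzero: "\<And>k. a < k \<Longrightarrow> k < b \<Longrightarrow> g k \<noteq> 0"
    and start: "g (Suc a) > 0"
  shows "a < k \<Longrightarrow> k < b \<Longrightarrow> g k > 0"
proof (induction k)
  case (Suc k)
  show ?case
  proof (cases "k = a")
    case False
    then have "g k > 0" using Suc by simp
    moreover have "\<bar>g (Suc k) - g k\<bar> \<le> 1" "g (Suc k) \<noteq> 0"
      using unit_steps nonzero False Suc.prems by auto
    ultimately show ?thesis by linarith
  qed (use start in simp)
qed simp

section \<open>Reflecting a segment of the path\<close>

text \<open>Complement the entries with index in [a, b): the path is reflected on that segment.\<close>
definition reflect :: "nat \<Rightarrow> nat \<Rightarrow> nat list \<Rightarrow> nat list" where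
  "reflect a b z = map (\<lambda>i. if a \<le> i \<and> i < b then 1 - z ! i else z ! i) [0..<length z]"

lemma length_reflect [simp]: "length (reflect a b z) = length z"
  by (simp add: reflect_def)

lemma nth_reflect:
  "i < length z \<Longrightarrow> reflect a b z ! i = (if a \<le> i \<and> i < b then 1 - z ! i else z ! i)"
  by (simp add: reflect_def)

lemma reflect_binary:
  assumes "set z \<subseteq> {0, 1}"
  shows "set (reflect a b z) \<subseteq> {0, 1}"
proof
  fix x assume "x \<in> set (reflect a b z)"
  then obtain i where "i < length z" "x = reflect a b z ! i"
    by (auto simp: in_set_conv_nth)
  then show "x \<in> {0, 1}"
    using nth_binary[OF assms, of i] by (auto simp: nth_reflect)
qed

lemma reflect_reflect:
  assumes "set z \<subseteq> {0, 1}"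
  shows "reflect a b (reflect a b z) = z"
proof (rule nth_equalityI)
  fix i assume "i < length (reflect a b (reflect a b z))"
  then show "reflect a b (reflect a b z) ! i = z ! i"
    using nth_binary[OF assms, of i] by (auto simp: nth_reflect)
qed simp

lemma path_step_reflect:
  assumes "set z \<subseteq> {0, 1}" "i < length z"
  shows "path_step (reflect a b z) i = (if a \<le> i \<and> i < b then - path_step z i else path_step z i)"
  using nth_binary[OF assms] assms(2) by (auto simp: path_step_def nth_reflect)

lemma height_reflect:
  assumes "set z \<subseteq> {0, 1}" "k \<le> length z" "a \<le> b"
  shows "height (reflect a b z) k = height z k - 2 * (height z (min k b) - height z (min k a))"
  using assms(2)
proof (induction k)
  case (Suc k)
  have IH: "height (reflect a b z) k = height z k - 2 * (height z (min k b) - height z (min k a))"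
    using Suc by simp
  have "k < length z" using Suc.prems by simp
  from path_step_reflect[OF assms(1) this] IH assms(3) show ?case
    by (cases "k < a"; cases "k < b") (auto simp: height_Suc min_def)
qed simp

lemma height_reflect_between_zeros:
  assumes "set z \<subseteq> {0, 1}" "k \<le> length z" "a \<le> b" "height z a = 0" "height z b = 0"
  shows "height (reflect a b z) k = (if a \<le> k \<and> k \<le> b then - height z k else height z k)"
  using height_reflect[OF assms(1-3)] assms(3-5) by (auto simp: min_def)

lemma moment_by_parts:
  assumes "a \<le> k"
  shows "(\<Sum>i\<in>{a..<k}. int (Suc i) * path_step z i)
           = int k * height z k - int a * height z a - (\<Sum>i\<in>{a..<k}. height z i)"
  using assms
proof (induction k rule: dec_induct)
  case (step k)
  then show ?case by (simp add: height_Suc algebra_simps)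
qed simp

lemma moment_reflect:
  assumes bin: "set z \<subseteq> {0, 1}" and "a \<le> b" "b \<le> length z"
    and "height z a = 0" "height z b = 0"
  shows "(\<Sum>i<length z. int (Suc i) * int (reflect a b z ! i))
           = (\<Sum>i<length z. int (Suc i) * int (z ! i)) + (\<Sum>i\<in>{a..<b}. height z i)"
proof -
  let ?d = "\<lambda>i. if i \<in> {a..<b} then - (int (Suc i) * path_step z i) else 0"
  have pointwise: "int (Suc i) * int (reflect a b z ! i) = int (Suc i) * int (z ! i) + ?d i"
    if "i < length z" for i
    using nth_binary[OF bin that] that by (auto simp: nth_reflect path_step_def algebra_simps)
  have "(\<Sum>i<length z. ?d i) = (\<Sum>i\<in>{..<length z} \<inter> {a..<b}. - (int (Suc i) * path_step z i))"
    by (rule sum.inter_restrict[symmetric]) simp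
  also have "{..<length z} \<inter> {a..<b} = {a..<b}"
    using assms(3) by auto
  also have "(\<Sum>i\<in>{a..<b}. - (int (Suc i) * path_step z i)) = (\<Sum>i\<in>{a..<b}. height z i)"
    using moment_by_parts[OF assms(2), of z] assms(4,5) by (simp add: sum_negf)
  finally show ?thesis
    using pointwise by (simp add: sum.distrib)
qed

lemma Aval_moment:
  "Aval n z = (\<Sum>i<2 * n. int (Suc i) * int (z ! i)) - int (n * (n + 1) div 2)"
  by (simp add: Aval_def sum.atLeast1_atMost_eq)

section \<open>The excursion flip\<close>

definition last_zero :: "nat \<Rightarrow> nat list \<Rightarrow> nat" where
  "last_zero p z = Max {k. k \<le> p \<and> height z k = 0}"

definition next_zero :: "nat \<Rightarrow> nat list \<Rightarrow> nat" where
  "next_zero p z = Min {k. p < k \<and> k \<le> length z \<and> height z k = 0}"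

definition excursion_flip :: "nat \<Rightarrow> nat list \<Rightarrow> nat list" where
  "excursion_flip p z = reflect (last_zero p z) (next_zero p z) z"

definition not_above :: "nat \<Rightarrow> nat list \<Rightarrow> bool" where
  "not_above p y = (height y p + int (y ! p) \<le> 0)"

locale excursion =
  fixes p :: nat and z :: "nat list"
  assumes binary: "set z \<subseteq> {0, 1}"
    and returns: "height z (length z) = 0"
    and p_less: "p < length z"
begin

abbreviation "t0 \<equiv> last_zero p z"
abbreviation "t1 \<equiv> next_zero p z"
abbreviation "z' \<equiv> excursion_flip p z"

lemma t0_props: "t0 \<le> p" "height z t0 = 0" "\<And>k. t0 < k \<Longrightarrow> k \<le> p \<Longrightarrow> height z k \<noteq> 0"
proof -
  let ?S = "{k. k \<le> p \<and> height z k = 0}"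
  have fin: "finite ?S" by (rule finite_subset[of _ "{..p}"]) auto
  have "t0 \<in> ?S" unfolding last_zero_def using fin by (intro Max_in) auto
  then show "t0 \<le> p" "height z t0 = 0" by auto
  show "\<And>k. t0 < k \<Longrightarrow> k \<le> p \<Longrightarrow> height z k \<noteq> 0"
    using Max_ge[OF fin] unfolding last_zero_def by fastforce
qed

text \<open>t1 is a zero of the height after p (it exists since the path returns to 0),
  and the first one.\<close>
lemma t1_props: "p < t1" "t1 \<le> length z" "height z t1 = 0"
  "\<And>k. p < k \<Longrightarrow> k < t1 \<Longrightarrow> height z k \<noteq> 0"
proof -
  let ?S = "{k. p < k \<and> k \<le> length z \<and> height z k = 0}"
  have fin: "finite ?S" by (rule finite_subset[of _ "{..length z}"]) auto
  have "t1 \<in> ?S" unfolding next_zero_def using fin p_less returns by (intro Min_in) auto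
  then show "p < t1" "t1 \<le> length z" "height z t1 = 0" by auto
  then show "\<And>k. p < k \<Longrightarrow> k < t1 \<Longrightarrow> height z k \<noteq> 0"
    using Min_le[OF fin] unfolding next_zero_def by fastforce
qed

lemma height_nonzero_inside: "t0 < k \<Longrightarrow> k < t1 \<Longrightarrow> height z k \<noteq> 0"
  using t0_props(3) t1_props(4) by (cases "k \<le> p") auto

lemma height_flip:
  "k \<le> length z \<Longrightarrow> height z' k = (if t0 \<le> k \<and> k \<le> t1 then - height z k else height z k)"
  unfolding excursion_flip_def
  using height_reflect_between_zeros[OF binary] t0_props t1_props by simp

text \<open>The flip does not move the zeros of the height, hence not the excursion.\<close>
lemma same_excursion: "last_zero p z' = t0" "next_zero p z' = t1"
proof -
  have zeros: "k \<le> length z \<Longrightarrow> height z' k = 0 \<longleftrightarrow> height z k = 0" for k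
    using height_flip by simp
  then have "{k. k \<le> p \<and> height z' k = 0} = {k. k \<le> p \<and> height z k = 0}"
    using p_less by auto
  then show "last_zero p z' = t0" by (simp add: last_zero_def)
  have "{k. p < k \<and> k \<le> length z' \<and> height z' k = 0} = {k. p < k \<and> k \<le> length z \<and> height z k = 0}"
    using zeros by (auto simp: excursion_flip_def)
  then show "next_zero p z' = t1" by (simp add: next_zero_def)
qed

lemma flip_flip: "excursion_flip p z' = z"
  using same_excursion reflect_reflect[OF binary] by (simp add: excursion_flip_def)

lemma flip_returns: "height z' (length z') = 0"
  using height_flip[of "length z"] returns by (simp add: excursion_flip_def)

lemma flip_binary: "set z' \<subseteq> {0, 1}"
  unfolding excursion_flip_def by (rule reflect_binary[OF binary])

lemma length_flip: "length z' = length z"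
  by (simp add: excursion_flip_def)

lemma flip_not_above: "\<not> not_above p z \<Longrightarrow> not_above p z'"
  using height_flip[of p] p_less t0_props(1) t1_props(1) nth_binary[OF binary p_less]
  by (auto simp: not_above_def excursion_flip_def nth_reflect)

lemma excursion_positive:
  assumes "\<not> not_above p z"
  shows "t0 < k \<Longrightarrow> k < t1 \<Longrightarrow> height z k > 0"
proof -
  have unit_steps: "\<And>k. t0 \<le> k \<Longrightarrow> k < t1 \<Longrightarrow> \<bar>height z (Suc k) - height z k\<bar> \<le> 1"
    using height_step_bound[OF binary] t1_props(2) by simp
  have zp: "z ! p = 0 \<or> z ! p = 1" using nth_binary[OF binary p_less] .
  have start: "height z (Suc t0) > 0"
  proof (cases "t0 = p")
    case True
    then show ?thesis using assms zp t0_props(2) by (auto simp: not_above_def height_Suc path_step_def)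
  next
    case False
    then have "t0 < p" using t0_props(1) by simp
    then have "height z p > 0"
      using assms zp t0_props(3)[of p] by (auto simp: not_above_def)
    show ?thesis
    proof (rule ccontr)
      assume "\<not> height z (Suc t0) > 0"
      moreover have "height z (Suc t0) \<noteq> 0"
        using height_nonzero_inside \<open>t0 < p\<close> t1_props(1) by simp
      ultimately have "(\<lambda>k. - height z k) (Suc t0) > 0" by simp
      then have "(\<lambda>k. - height z k) p > 0"
        using positive_on_interval[of t0 t1 "\<lambda>k. - height z k" p] unit_steps
          height_nonzero_inside \<open>t0 < p\<close> t1_props(1) by fastforce
      with \<open>height z p > 0\<close> show False by simp
    qed
  qed
  show "t0 < k \<Longrightarrow> k < t1 \<Longrightarrow> height z k > 0"
    using positive_on_interval[of t0 t1 "height z" k] unit_steps height_nonzero_inside start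
    by blast
qed

lemma moment_flip_mono:
  assumes "\<not> not_above p z"
  shows "(\<Sum>i<length z. int (Suc i) * int (z ! i)) \<le> (\<Sum>i<length z. int (Suc i) * int (z' ! i))"
proof -
  have "(\<Sum>i\<in>{t0..<t1}. height z i) \<ge> 0"
    using excursion_positive[OF assms] t0_props(2)
    by (intro sum_nonneg) (fastforce simp: le_less)
  then show ?thesis
    unfolding excursion_flip_def
    using moment_reflect[OF binary _ t1_props(2) t0_props(2) t1_props(3)] t0_props(1) t1_props(1)
    by simp
qed

end

lemma card_shift:
  fixes m :: nat
  shows "card {k \<in> {1..m}. Q (k - 1)} = card {i. i < m \<and> Q i}"
proof -
  have "{k \<in> {1..m}. Q (k - 1)} = Suc ` {i. i < m \<and> Q i}"
  proof (rule set_eqI)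
    fix k show "k \<in> {k \<in> {1..m}. Q (k - 1)} \<longleftrightarrow> k \<in> Suc ` {i. i < m \<and> Q i}"
      by (cases k) auto
  qed
  then show ?thesis by (simp add: card_image)
qed

lemma card_ones_zeros:
  assumes "set z \<subseteq> {0, 1}" "m \<le> length z"
  shows "int (card {i. i < m \<and> z ! i = 1}) = (\<Sum>i<m. int (z ! i))
     \<and> int (card {i. i < m \<and> z ! i = 0}) = int m - (\<Sum>i<m. int (z ! i))"
  using assms(2)
proof (induction m)
  case (Suc m)
  have prefix: "{i. i < Suc m \<and> z ! i = c} =
      (if z ! m = c then insert m {i. i < m \<and> z ! i = c} else {i. i < m \<and> z ! i = c})" for c
    by (auto simp: less_Suc_eq)
  from Suc nth_binary[OF assms(1), of m] show ?case
    by (auto simp: prefix card_insert_if)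
qed simp

lemma event_iff_not_above:
  assumes "z \<in> balanced_strings n" "w \<in> {1..2 * n}"
  shows "(card {k \<in> {1..w}. z ! (k - 1) = 1} \<le> card {k \<in> {1..w - 1}. z ! (k - 1) = 0})
     \<longleftrightarrow> not_above (w - 1) z"
proof -
  have bin: "set z \<subseteq> {0, 1}" and len: "length z = 2 * n"
    using assms(1) by (auto simp: balanced_strings_def)
  have w: "w = Suc (w - 1)" using assms(2) by simp
  have ones: "int (card {k \<in> {1..w}. z ! (k - 1) = 1}) = (\<Sum>i<w. int (z ! i))"
    using card_ones_zeros[OF bin, of w] assms(2) len card_shift[of w "\<lambda>i. z ! i = 1"] by simp
  have zeros: "int (card {k \<in> {1..w - 1}. z ! (k - 1) = 0}) = int (w - 1) - (\<Sum>i<w - 1. int (z ! i))"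
    using card_ones_zeros[OF bin, of "w - 1"] assms(2) len card_shift[of "w - 1" "\<lambda>i. z ! i = 0"]
    by (auto simp: of_nat_diff)
  have "(\<Sum>i<w. int (z ! i)) = (\<Sum>i<w - 1. int (z ! i)) + int (z ! (w - 1))"
    by (subst w) simp
  moreover have "not_above (w - 1) z
      \<longleftrightarrow> 2 * (\<Sum>i<w - 1. int (z ! i)) - int (w - 1) + int (z ! (w - 1)) \<le> 0"
    by (simp add: not_above_def height_eq_ones)
  ultimately show ?thesis
    using ones zeros by (smt (verit) of_nat_le_iff)
qed

lemma half_weight_by_injection:
  fixes W :: "'a \<Rightarrow> real"
  assumes "finite B" "\<And>x. x \<in> B \<Longrightarrow> 0 \<le> W x" "0 < sum W B"
    and inj: "inj_on f {x \<in> B. \<not> P x}"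
    and into: "\<And>x. x \<in> B \<Longrightarrow> \<not> P x \<Longrightarrow> f x \<in> B \<and> P (f x) \<and> W x \<le> W (f x)"
  shows "1 / 2 \<le> sum W {x \<in> B. P x} / sum W B"
proof -
  let ?E = "{x \<in> B. P x}" and ?C = "{x \<in> B. \<not> P x}"
  have "sum W ?C \<le> sum (W \<circ> f) ?C"
    using into by (intro sum_mono) auto
  also have "\<dots> = sum W (f ` ?C)"
    using sum.reindex[OF inj, of W] by simp
  also have "\<dots> \<le> sum W ?E"
    using into assms(1,2) by (intro sum_mono2) auto
  finally have "sum W ?C \<le> sum W ?E" .
  moreover have "sum W B = sum W ?E + sum W ?C"
  proof -
    have "B = ?E \<union> ?C" "?E \<inter> ?C = {}" by auto
    then show ?thesis
      using assms(1) sum.union_disjoint[of ?E ?C W] by simp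
  qed
  ultimately show ?thesis
    using assms(3) by (simp add: field_simps)
qed

lemma balanced_strings_finite: "finite (balanced_strings n)"
proof (rule finite_subset)
  show "balanced_strings n \<subseteq> {xs. set xs \<subseteq> {0, 1} \<and> length xs = 2 * n}"
    by (auto simp: balanced_strings_def)
qed (rule finite_lists_length_eq, simp)

lemma minimal_string_balanced: "replicate n 0 @ replicate n 1 \<in> balanced_strings n"
  by (auto simp: balanced_strings_def sum_list_replicate)

lemma event_at_minimal_string:
  assumes "n \<ge> 1" "w \<in> {1..2 * n}"
  defines "z0 \<equiv> replicate n 0 @ replicate n (1::nat)"
  shows "card {k \<in> {1..w}. z0 ! (k - 1) = 1} \<le> card {k \<in> {1..w - 1}. z0 ! (k - 1) = 0}"
proof -
  have "{k \<in> {1..w}. z0 ! (k - 1) = 1} \<subseteq> {n + 1..w}"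
    by (auto simp: z0_def nth_append split: if_splits)
  then have ones: "card {k \<in> {1..w}. z0 ! (k - 1) = 1} \<le> card {n + 1..w}"
    by (rule card_mono[rotated]) simp
  have "{1..min n (w - 1)} \<subseteq> {k \<in> {1..w - 1}. z0 ! (k - 1) = 0}"
    by (auto simp: z0_def nth_append)
  then have zeros: "card {1..min n (w - 1)} \<le> card {k \<in> {1..w - 1}. z0 ! (k - 1) = 0}"
    by (rule card_mono[rotated]) simp
  have "card {n + 1..w} \<le> card {1..min n (w - 1)}"
    using assms(1,2) by auto
  with ones zeros show ?thesis
    by (meson order_trans)
qed

lemma event_half_weight:
  fixes q :: real
  assumes "0 < q" "q \<le> 1" "w \<in> {1..2 * n}"
  defines "B \<equiv> balanced_strings n" and "W \<equiv> \<lambda>z. q powi (- 2 * Aval n z)"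
  shows "1 / 2 \<le> sum W {z \<in> B. not_above (w - 1) z} / sum W B"
proof (rule half_weight_by_injection)
  let ?p = "w - 1"
  have exc: "excursion ?p z" if "z \<in> B" for z
    using that assms(3) by unfold_locales (auto simp: B_def balanced_strings_iff)
  show "finite B" unfolding B_def by (rule balanced_strings_finite)
  show "0 < sum W B"
    using minimal_string_balanced \<open>finite B\<close> assms(1)
    by (intro sum_pos2[of B _ W]) (auto simp: B_def W_def)
  show "inj_on (excursion_flip ?p) {z \<in> B. \<not> not_above ?p z}"
  proof (rule inj_on_inverseI)
    fix z assume "z \<in> {z \<in> B. \<not> not_above ?p z}"
    then show "excursion_flip ?p (excursion_flip ?p z) = z"
      using exc excursion.flip_flip by blast
  qed
  fix z assume z: "z \<in> B" "\<not> not_above ?p z"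
  interpret excursion ?p z using exc[OF z(1)] .
  have len: "length z = 2 * n" using z(1) by (simp add: B_def balanced_strings_def)
  show "excursion_flip ?p z \<in> B \<and> not_above ?p (excursion_flip ?p z)
        \<and> W z \<le> W (excursion_flip ?p z)"
  proof (intro conjI)
    show "excursion_flip ?p z \<in> B"
      using len flip_binary flip_returns length_flip by (simp add: B_def balanced_strings_iff)
    show "not_above ?p z'" using flip_not_above z(2) by simp
    have "Aval n z \<le> Aval n z'"
      using moment_flip_mono[OF z(2)] len length_flip by (simp add: Aval_moment)
    then show "W z \<le> W z'"
      unfolding W_def using assms(1,2) by (intro power_int_decreasing) auto
  qed
qed (use assms(1) in \<open>auto simp: W_def\<close>)

theorem mainTheorem6:
  fixes n w :: nat and q :: real
  assumes "n \<ge> 1" and "0 \<le> q" and "q \<le> 1" and "w \<in> {1..2 * n}"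
  shows "mu q n (\<lambda>z. card {k \<in> {1..w}. z ! (k - 1) = 1}
                      \<le> card {k \<in> {1..w - 1}. z ! (k - 1) = 0}) \<ge> 1 / 2"
proof (cases "q = 0")
  case True
  then show ?thesis
    using event_at_minimal_string[OF assms(1,4)] by (simp add: mu_def)
next
  case False
  let ?E = "\<lambda>z. card {k \<in> {1..w}. z ! (k - 1) = 1} \<le> card {k \<in> {1..w - 1}. z ! (k - 1) = 0}"
  have "{z \<in> balanced_strings n. ?E z} = {z \<in> balanced_strings n. not_above (w - 1) z}"
    using event_iff_not_above[OF _ assms(4)] by auto
  then have "mu q n ?E = (\<Sum>z\<in>{z \<in> balanced_strings n. not_above (w - 1) z}. q powi (- 2 * Aval n z))
                         / (\<Sum>z\<in>balanced_strings n. q powi (- 2 * Aval n z))"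
    unfolding mu_def if_not_P[OF False] by (rule arg_cong)
  with event_half_weight[of q w n] False assms(2-4) show ?thesis
    by simp
qed

end
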